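(* For every integer $n\ge0$, $$B^{(c)}_{n,\lambda}(x,y)=\sum_{m=0}^{n}\sum_{k=0}^{m}\sum_{l=0}^{\lfloor k/2\rfloor}\binom{n}{m}\binom{k}{2l}(-1)^l\lambda^{n-k}S_1(m,k)\,b_{n-m}\,B_{k-2l}(x)\,y^{2l}.$$ Furthermore, for every integer $n\ge1$, $$B^{(s)}_{n,\lambda}(x,y)=\sum_{m=0}^{n}\sum_{k=0}^{m}\sum_{l=0}^{\lfloor (k-1)/2\rfloor}\binom{n}{m}\binom{k}{2l+1}(-1)^l\lambda^{n-k}S_1(m,k)\,b_{n-m}\,B_{k-2l-1}(x)\,y^{2l+1},$$ where an inner sum with upper limit $-1$ is empty.
   Context: Let $\lambda$ be a nonzero real number; generating functions are formal power series in $t$. $e_\lambda^{x}(t)=(1+\lambda t)^{x/\lambda}$, $\cos_\lambda^{(y)}(t)=\cos\!\big(\tfrac{y}{\lambda}\log(1+\lambda t)\big)$, $\sin_\lambda^{(y)}(t)=\sin\!\big(\tfrac{y}{\lambda}\log(1+\lambda t)\big)$. The type 2 degenerate cosine-Bernoulli and sine-Bernoulli polynomials are defined by $\frac{t}{e_\lambda^{1/2}(t)-e_\lambda^{-1/2}(t)}e_\lambda^{x}(t)\cos_\lambda^{(y)}(t)=\sum_{n\ge0}B^{(c)}_{n,\lambda}(x,y)\frac{t^n}{n!}$ and the same with $\sin_\lambda^{(y)}(t)$ giving $B^{(s)}_{n,\lambda}(x,y)$. The (non-degenerate) type 2 Bernoulli polynomials are defined by $\frac{t}{e^{t/2}-e^{-t/2}}e^{xt}=\sum_{n\ge0}B_n(x)\frac{t^n}{n!}$.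 The Bernoulli numbers of the second kind $b_n$ are defined by $\frac{t}{\log(1+t)}=\sum_{n\ge0}b_n\frac{t^n}{n!}$. $S_1(n,k)$ are the signed Stirling numbers of the first kind, $\frac{1}{k!}(\log(1+t))^k=\sum_{n\ge k}S_1(n,k)\frac{t^n}{n!}$. *)

theory Defs
  imports "HOL-Computational_Algebra.Formal_Power_Series"
begin

definition dlog :: "real \<Rightarrow> real fps" where
  "dlog lam = fps_ln 1 oo (fps_const lam * fps_X)"

text \<open>degenerate exponential e_lam^x(t) = (1 + lam t)^(x/lam)\<close>
definition dexp :: "real \<Rightarrow> real \<Rightarrow> real fps" where
  "dexp lam x = fps_binomial (x / lam) oo (fps_const lam * fps_X)"

definition dcos :: "real \<Rightarrow> real \<Rightarrow> real fps" where
  "dcos lam y = fps_cos (y / lam) oo dlog lam"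

definition dsin :: "real \<Rightarrow> real \<Rightarrow> real fps" where
  "dsin lam y = fps_sin (y / lam) oo dlog lam"

definition dfactor :: "real \<Rightarrow> real fps" where
  "dfactor lam = fps_X / (dexp lam (1/2) - dexp lam (-1/2))"

definition cos_bernoulli :: "nat \<Rightarrow> real \<Rightarrow> real \<Rightarrow> real \<Rightarrow> real" where
  "cos_bernoulli n lam x y = fact n * fps_nth (dfactor lam * dexp lam x * dcos lam y) n"

definition sin_bernoulli :: "nat \<Rightarrow> real \<Rightarrow> real \<Rightarrow> real \<Rightarrow> real" where
  "sin_bernoulli n lam x y = fact n * fps_nth (dfactor lam * dexp lam x * dsin lam y) n"

definition bernoulli2 :: "nat \<Rightarrow> real \<Rightarrow> real" where
  "bernoulli2 n x = fact n * fps_nth (fps_X / (fps_exp (1/2) - fps_exp (-1/2)) * fps_exp x) n"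

definition bernoulli_2nd :: "nat \<Rightarrow> real" where
  "bernoulli_2nd n = fact n * fps_nth (fps_X / fps_ln 1) n"

text \<open>Signed Stirling numbers of the first kind: (log(1+t))^k / k!\<close>
definition stirling1 :: "nat \<Rightarrow> nat \<Rightarrow> real" where
  "stirling1 n k = fact n * fps_nth (fps_ln 1 ^ k / fps_const (fact k)) n"

end

theory Submission
  imports Defs
begin

text \<open>Substituting \<open>s = log(1 + lam t) / lam\<close> into \<open>exp(x s)\<close>, \<open>cos(y s)\<close> and
  \<open>sin(y s)\<close> yields their degenerate versions, and the degenerate prefactor splits as
  \<open>t / (e_lam^(1/2)(t) - e_lam^(-1/2)(t)) = [s / (e^(s/2) - e^(-s/2))] * lam t / log(1 + lam t)\<close>.
  So the generating function is \<open>G(s(t)) * lam t / log(1 + lam t)\<close>, where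
  \<open>G(s) = s / (e^(s/2) - e^(-s/2)) * exp(x s) * cos(y s)\<close>. Expanding the powers \<open>s(t)^k\<close>
  by Stirling numbers of the first kind, \<open>lam t / log(1 + lam t)\<close> by Bernoulli numbers of the
  second kind, and the coefficients of \<open>G\<close> as a Cauchy product with the cosine (sine) series
  gives the triple sums.\<close>

unbundle fps_syntax

lemma fps_binomial_eq_exp_compose_ln:
  "fps_binomial (a::'a::field_char_0) = fps_exp a oo fps_ln 1"
proof -
  let ?g = "fps_exp a oo fps_ln (1::'a)"
  have "fps_deriv ?g = fps_const a * ?g / (1 + fps_X)"
    by (simp add: fps_compose_deriv fps_ln_deriv fps_divide_unit
        fps_const_mult_apply_left[symmetric] mult.assoc)
  moreover have "?g $ 0 = 1" by simp
  ultimately show ?thesis using fps_binomial_ODE_unique'[of ?g a] by simp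
qed

lemma fps_cos_compose_linear:
  "fps_cos (d::'a::field_char_0) oo (fps_const c * fps_X) = fps_cos (c * d)"
  by (simp add: fps_compose_linear fps_cos_def fps_eq_iff power_mult_distrib)

lemma fps_sin_compose_linear:
  "fps_sin (d::'a::field_char_0) oo (fps_const c * fps_X) = fps_sin (c * d)"
  by (simp add: fps_compose_linear fps_sin_def fps_eq_iff power_mult_distrib)

lemma fps_X_mult_shift_1:
  fixes f :: "'a::comm_ring_1 fps"
  assumes "f $ 0 = 0"
  shows "fps_X * fps_shift 1 f = f"
  using assms by (intro fps_ext) (simp add: fps_X_mult_nth)

lemma fps_X_divide_X_mult:
  fixes w :: "'a::field fps"
  assumes "w $ 0 \<noteq> 0"
  shows "fps_X / (fps_X * w) = inverse w"
  using fps_divide_by_mult[of fps_X fps_X w] assms by (simp add: fps_divide_unit)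

lemma fps_X_divide_eq_inverse_shift_1:
  fixes f :: "'a::field fps"
  assumes "f $ 0 = 0" and "f $ 1 \<noteq> 0"
  shows "fps_X / f = inverse (fps_shift 1 f)"
proof -
  have "fps_shift 1 f $ 0 \<noteq> 0" using assms(2) by simp
  then show ?thesis using fps_X_divide_X_mult fps_X_mult_shift_1[OF assms(1)] by metis
qed

definition dlog_scaled :: "real \<Rightarrow> real fps" where
  "dlog_scaled lam = fps_const (1/lam) * dlog lam"

lemma dlog_nth_0 [simp]: "dlog lam $ 0 = 0"
  by (simp add: dlog_def)

lemma dlog_scaled_nth_0 [simp]: "dlog_scaled lam $ 0 = 0"
  by (simp add: dlog_scaled_def)

lemma dlog_scaled_eq_compose: "dlog_scaled lam = (fps_const (1/lam) * fps_X) oo dlog lam"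
  by (simp add: dlog_scaled_def fps_const_mult_apply_left[symmetric])

lemma dexp_eq_exp_compose:
  assumes "lam \<noteq> 0"
  shows "dexp lam x = fps_exp x oo dlog_scaled lam"
proof -
  have "fps_exp x oo dlog_scaled lam = fps_exp (x/lam) oo (fps_ln 1 oo (fps_const lam * fps_X))"
    by (simp add: dlog_scaled_eq_compose dlog_def fps_compose_assoc)
  also have "\<dots> = dexp lam x"
    by (simp add: dexp_def fps_compose_assoc fps_binomial_eq_exp_compose_ln)
  finally show ?thesis ..
qed

lemma dcos_eq_cos_compose: "dcos lam y = fps_cos y oo dlog_scaled lam"
  by (simp add: dcos_def dlog_scaled_eq_compose fps_compose_assoc fps_cos_compose_linear)

lemma dsin_eq_sin_compose: "dsin lam y = fps_sin y oo dlog_scaled lam"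
  by (simp add: dsin_def dlog_scaled_eq_compose fps_compose_assoc fps_sin_compose_linear)

lemma dlog_scaled_eq_X_mult:
  assumes "lam \<noteq> 0"
  shows "dlog_scaled lam = fps_X * (fps_shift 1 (fps_ln 1) oo (fps_const lam * fps_X))"
proof (rule fps_ext)
  fix n
  show "dlog_scaled lam $ n = (fps_X * (fps_shift 1 (fps_ln 1) oo (fps_const lam * fps_X))) $ n"
    using assms by (cases n) (simp_all add: fps_X_mult_nth dlog_scaled_def dlog_def fps_ln_nth)
qed

lemma dfactor_eq:
  assumes "lam \<noteq> 0"
  shows "dfactor lam = ((fps_X / (fps_exp (1/2) - fps_exp (-1/2))) oo dlog_scaled lam)
                       * ((fps_X / fps_ln 1) oo (fps_const lam * fps_X))"
proof -
  define E :: "real fps" where "E = fps_exp (1/2) - fps_exp (-1/2)"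
  define L where "L = fps_shift 1 (fps_ln (1::real)) oo (fps_const lam * fps_X)"
  have E0: "E $ 0 = 0" and E1: "E $ 1 \<noteq> 0" by (simp_all add: E_def)
  have L0: "L $ 0 \<noteq> 0" by (simp add: L_def fps_ln_nth)
  have "dexp lam (1/2) - dexp lam (-1/2) = (fps_X * fps_shift 1 E) oo dlog_scaled lam"
    unfolding fps_X_mult_shift_1[OF E0]
    by (simp add: E_def dexp_eq_exp_compose[OF assms] fps_compose_sub_distrib)
  also have "\<dots> = fps_X * (L * (fps_shift 1 E oo dlog_scaled lam))"
    by (simp add: fps_compose_mult_distrib dlog_scaled_eq_X_mult[OF assms, folded L_def] mult.assoc)
  finally have "dfactor lam = inverse (L * (fps_shift 1 E oo dlog_scaled lam))"
    unfolding dfactor_def using E1 L0 by (simp add: fps_X_divide_X_mult)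
  also have "\<dots> = (inverse (fps_shift 1 E) oo dlog_scaled lam) * inverse L"
    using E1 by (simp add: fps_inverse_mult fps_inverse_compose mult.commute)
  also have "inverse L = (fps_X / fps_ln 1) oo (fps_const lam * fps_X)"
    by (simp add: L_def fps_inverse_compose fps_ln_nth fps_X_divide_eq_inverse_shift_1)
  finally show ?thesis by (simp add: E_def E0 E1 fps_X_divide_eq_inverse_shift_1)
qed

lemma dlog_scaled_power_nth:
  assumes "lam \<noteq> 0"
  shows "(dlog_scaled lam ^ k) $ m = lam ^ m / lam ^ k * stirling1 m k * fact k / fact m"
proof -
  have "dlog_scaled lam ^ k = fps_const ((1/lam) ^ k) * (fps_ln 1 ^ k oo (fps_const lam * fps_X))"
    by (simp add: dlog_scaled_def dlog_def power_mult_distrib fps_compose_power fps_const_power)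
  thus ?thesis by (simp add: stirling1_def power_one_over)
qed

lemma nth_bernoulli_2nd_gf_compose_linear:
  "((fps_X / fps_ln 1) oo (fps_const lam * fps_X)) $ n = lam ^ n * bernoulli_2nd n / fact n"
  by (simp add: bernoulli_2nd_def)

lemma fact_nth_compose_dlog_scaled_expansion:
  assumes "lam \<noteq> 0"
  shows "fact n * ((H oo dlog_scaled lam) * ((fps_X / fps_ln 1) oo (fps_const lam * fps_X))) $ n =
    (\<Sum>m=0..n. \<Sum>k=0..m. real (n choose m) * lam ^ (n-k) * stirling1 m k * bernoulli_2nd (n-m)
        * (fact k * H $ k))"
proof -
  have summand: "fact n * (H $ k * (lam ^ m / lam ^ k * S * fact k / fact m))
                * (lam ^ (n-m) * b / fact (n-m))
              = real (n choose m) * lam ^ (n-k) * S * b * (fact k * H $ k)"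
    if "k \<le> m" "m \<le> n" for k m S b
  proof -
    have "lam ^ m * lam ^ (n-m) = lam ^ (n-k) * lam ^ k"
      using that by (simp flip: power_add)
    moreover have "real (n choose m) = fact n / (fact m * fact (n-m))"
      using that by (simp add: binomial_fact)
    ultimately show ?thesis using assms by (simp add: field_simps)
  qed
  have "fact n * ((H oo dlog_scaled lam) * ((fps_X / fps_ln 1) oo (fps_const lam * fps_X))) $ n
     = (\<Sum>m=0..n. \<Sum>k=0..m. fact n * (H $ k * (dlog_scaled lam ^ k) $ m)
          * ((fps_X / fps_ln 1) oo (fps_const lam * fps_X)) $ (n-m))"
    by (simp only: fps_mult_nth fps_compose_nth[of H] sum_distrib_left sum_distrib_right mult.assoc)
  also have "\<dots> = (\<Sum>m=0..n. \<Sum>k=0..m. real (n choose m) * lam ^ (n-k) * stirling1 m k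
          * bernoulli_2nd (n-m) * (fact k * H $ k))"
    unfolding dlog_scaled_power_nth[OF assms] nth_bernoulli_2nd_gf_compose_linear
    by (intro sum.cong refl summand) auto
  finally show ?thesis .
qed

lemma degenerate_gf_eq_compose:
  assumes "lam \<noteq> 0"
  shows "dfactor lam * dexp lam x * (T oo dlog_scaled lam) =
    ((fps_X / (fps_exp (1/2) - fps_exp (-1/2)) * fps_exp x * T) oo dlog_scaled lam)
      * ((fps_X / fps_ln 1) oo (fps_const lam * fps_X))"
  by (simp add: dfactor_eq dexp_eq_exp_compose assms fps_compose_mult_distrib mult_ac)

lemma sum_if_even_eq:
  fixes f :: "nat \<Rightarrow> 'a::comm_monoid_add"
  shows "(\<Sum>i=0..k. if even i then f i else 0) = (\<Sum>l=0..k div 2. f (2*l))"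
proof -
  have evens: "(\<lambda>l. 2*l) ` {0..k div 2} = {i\<in>{0..k}. even i}"
    by (auto simp: image_iff elim!: evenE)
  have "(\<Sum>l=0..k div 2. f (2*l)) = sum f ((\<lambda>l. 2*l) ` {0..k div 2})"
    by (simp add: sum.reindex inj_on_def)
  also have "\<dots> = (\<Sum>i=0..k. if even i then f i else 0)"
    unfolding evens by (subst sum.inter_filter) auto
  finally show ?thesis ..
qed

lemma sum_if_odd_eq:
  fixes f :: "nat \<Rightarrow> 'a::comm_monoid_add"
  shows "(\<Sum>i=0..k. if even i then 0 else f i) = (\<Sum>l<(k+1) div 2. f (2*l+1))"
proof -
  have odds: "(\<lambda>l. 2*l+1) ` {..<(k+1) div 2} = {i\<in>{0..k}. odd i}"
    by (auto simp: image_iff elim!: oddE)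
  have "(\<Sum>l<(k+1) div 2. f (2*l+1)) = sum f ((\<lambda>l. 2*l+1) ` {..<(k+1) div 2})"
    by (simp add: sum.reindex inj_on_def)
  also have "\<dots> = (\<Sum>i=0..k. if even i then 0 else f i)"
    unfolding odds by (subst sum.inter_filter) (auto intro!: sum.cong)
  finally show ?thesis ..
qed

lemma fact_nth_mult_fps_cos:
  fixes G :: "real fps"
  shows "fact k * (G * fps_cos y) $ k =
    (\<Sum>l=0..k div 2. real (k choose (2*l)) * (-1)^l * (fact (k-2*l) * G $ (k-2*l)) * y^(2*l))"
proof -
  define f where "f i = fact k * ((-1)^(i div 2) * y^i / fact i) * G $ (k-i)" for i
  have "fact k * (G * fps_cos y) $ k = (\<Sum>i=0..k. if even i then f i else 0)"
    unfolding mult.commute[of G] fps_mult_nth sum_distrib_left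
    by (intro sum.cong refl) (auto simp: fps_cos_def f_def)
  also have "\<dots> = (\<Sum>l=0..k div 2. f (2*l))"
    by (rule sum_if_even_eq)
  also have "\<dots> = (\<Sum>l=0..k div 2. real (k choose (2*l)) * (-1)^l * (fact (k-2*l) * G $ (k-2*l)) * y^(2*l))"
    by (intro sum.cong refl) (auto simp: f_def binomial_fact)
  finally show ?thesis .
qed

lemma fact_nth_mult_fps_sin:
  fixes G :: "real fps"
  shows "fact k * (G * fps_sin y) $ k =
    (\<Sum>l<(k+1) div 2. real (k choose (2*l+1)) * (-1)^l * (fact (k-2*l-1) * G $ (k-2*l-1)) * y^(2*l+1))"
proof -
  define f where "f i = fact k * ((-1)^((i - 1) div 2) * y^i / fact i) * G $ (k-i)" for i
  have "fact k * (G * fps_sin y) $ k = (\<Sum>i=0..k. if even i then 0 else f i)"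
    unfolding mult.commute[of G] fps_mult_nth sum_distrib_left
    by (intro sum.cong refl) (auto simp: fps_sin_def f_def)
  also have "\<dots> = (\<Sum>l<(k+1) div 2. f (2*l+1))"
    by (rule sum_if_odd_eq)
  also have "\<dots> = (\<Sum>l<(k+1) div 2. real (k choose (2*l+1)) * (-1)^l * (fact (k-2*l-1) * G $ (k-2*l-1)) * y^(2*l+1))"
    by (intro sum.cong refl) (auto simp: f_def binomial_fact simp del: fact_Suc)
  finally show ?thesis .
qed

theorem theorem2p6:
  fixes lam x y :: real
  assumes "lam \<noteq> 0"
  shows "(\<forall>n. cos_bernoulli n lam x y =
            (\<Sum>m=0..n. \<Sum>k=0..m. \<Sum>l=0..k div 2.
               real (n choose m) * real (k choose (2*l)) * (-1)^l * lam^(n-k)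
               * stirling1 m k * bernoulli_2nd (n-m) * bernoulli2 (k-2*l) x * y^(2*l)))
       \<and> (\<forall>n\<ge>1. sin_bernoulli n lam x y =
            (\<Sum>m=0..n. \<Sum>k=0..m. \<Sum>l<(k+1) div 2.
               real (n choose m) * real (k choose (2*l+1)) * (-1)^l * lam^(n-k)
               * stirling1 m k * bernoulli_2nd (n-m) * bernoulli2 (k-2*l-1) x * y^(2*l+1)))"
proof (intro conjI allI impI)
  fix n :: nat
  show "cos_bernoulli n lam x y =
            (\<Sum>m=0..n. \<Sum>k=0..m. \<Sum>l=0..k div 2.
               real (n choose m) * real (k choose (2*l)) * (-1)^l * lam^(n-k)
               * stirling1 m k * bernoulli_2nd (n-m) * bernoulli2 (k-2*l) x * y^(2*l))"
    unfolding cos_bernoulli_def dcos_eq_cos_compose degenerate_gf_eq_compose[OF assms]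
      fact_nth_compose_dlog_scaled_expansion[OF assms] fact_nth_mult_fps_cos
      bernoulli2_def[symmetric]
    by (simp add: sum_distrib_left mult_ac)
  \<comment> \<open>the sine identity holds for \<open>n = 0\<close> as well\<close>
  show "sin_bernoulli n lam x y =
            (\<Sum>m=0..n. \<Sum>k=0..m. \<Sum>l<(k+1) div 2.
               real (n choose m) * real (k choose (2*l+1)) * (-1)^l * lam^(n-k)
               * stirling1 m k * bernoulli_2nd (n-m) * bernoulli2 (k-2*l-1) x * y^(2*l+1))"
    unfolding sin_bernoulli_def dsin_eq_sin_compose degenerate_gf_eq_compose[OF assms]
      fact_nth_compose_dlog_scaled_expansion[OF assms] fact_nth_mult_fps_sin
      bernoulli2_def[symmetric]
    by (simp add: sum_distrib_left mult_ac)
qed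

end
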